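(* Fix a protocol in the totally quasi-ordered population protocol model $\mathrm{POP}^{\precsim}$, with finite state set $Q$, totally ordered color set $\mathbb{D}$, and transition function $\delta:Q^2\times\{<,=,>\}\to Q^2$. Let $\to$ be its transition relation and $\le$ the subconfiguration relation described below. Then $\le$ is a well-quasi-order on configurations and $\to$ is compatible with $\le$; that is, (configurations, $\le$, $\to$) is a well-structured transition system.
   Context: In $\mathrm{POP}^{\precsim}$, a configuration with $n$ agents is a sequence $((q_1,d_1),\dots,(q_n,d_n))\in(Q\times\mathbb{D})^n$ with $d_1\le d_2\le\dots\le d_n$ (agents sorted by color; $q_i$ is the mutable state, $d_i$ the immutable hidden color). A transition chooses an ordered pair $(i,j)$ of distinct agents (initiator $i$, responder $j$) and replaces $(q_i,q_j)$ by $\delta(q_i,q_j,r)$, where $r\in\{<,=,>\}$ is the result of comparing $d_i$ with $d_j$; all other components are unchanged. The subconfiguration relation: for configurations $s=((q_i,d_i))_{i\le m}$ and $t=((q'_i,d'_i))_{i\le m'}$, $s\le t$ iff there is a strictly increasing $f:\{1,\dots,m\}\to\{1,\dots,m'\}$ with $q_i=q'_{f(i)}$ for all $i$ and, for all $i,j$, $d_i\le d_j$ iff $d'_{f(i)}\le d'_{f(j)}$. A well-quasi-order is a reflexive transitive relation such that every infinite sequence $x_0,x_1,\dots$ has $i<j$ with $x_i\le x_j$. Compatibility means: whenever $s\to s'$ and $s\le t$, there exists $t'$ with $t\to t'$ and $s'\le t'$. *)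

theory Defs
  imports Main
begin

datatype cmp = Lt | Eq | Gt

definition compare :: "'d::linorder \<Rightarrow> 'd \<Rightarrow> cmp" where
  "compare x y = (if x < y then Lt else if x = y then Eq else Gt)"

definition is_config :: "('q \<times> 'd::linorder) list \<Rightarrow> bool" where
  "is_config c \<longleftrightarrow> sorted (map snd c)"

(* One transition of the protocol with transition function delta:
   initiator i, responder j (distinct, 0-based indices) *)
definition step ::
  "('q \<Rightarrow> 'q \<Rightarrow> cmp \<Rightarrow> 'q \<times> 'q) \<Rightarrow> ('q \<times> 'd::linorder) list \<Rightarrow> ('q \<times> 'd) list \<Rightarrow> bool" where
  "step delta c c' \<longleftrightarrow>
     (\<exists>i j. i < length c \<and> j < length c \<and> i \<noteq> j \<and>
        (let (qi, di) = c ! i; (qj, dj) = c ! j;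
             (qi', qj') = delta qi qj (compare di dj)
         in c' = c[i := (qi', di), j := (qj', dj)]))"

definition subconf :: "('q \<times> 'd::linorder) list \<Rightarrow> ('q \<times> 'd) list \<Rightarrow> bool" where
  "subconf s t \<longleftrightarrow>
     (\<exists>f::nat \<Rightarrow> nat.
        strict_mono_on {..<length s} f \<and>
        (\<forall>i<length s. f i < length t) \<and>
        (\<forall>i<length s. fst (s ! i) = fst (t ! f i)) \<and>
        (\<forall>i<length s. \<forall>j<length s.
            (snd (s ! i) \<le> snd (s ! j)) \<longleftrightarrow> (snd (t ! f i) \<le> snd (t ! f j))))"

definition wqo_on :: "('a \<Rightarrow> 'a \<Rightarrow> bool) \<Rightarrow> 'a set \<Rightarrow> bool" where
  "wqo_on le A \<longleftrightarrow>
     (\<forall>x\<in>A. le x x) \<and>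
     (\<forall>x\<in>A. \<forall>y\<in>A. \<forall>z\<in>A. le x y \<longrightarrow> le y z \<longrightarrow> le x z) \<and>
     (\<forall>X::nat \<Rightarrow> 'a. (\<forall>k. X k \<in> A) \<longrightarrow> (\<exists>i j. i < j \<and> le (X i) (X j)))"

definition compatible_on ::
  "('a \<Rightarrow> 'a \<Rightarrow> bool) \<Rightarrow> ('a \<Rightarrow> 'a \<Rightarrow> bool) \<Rightarrow> 'a set \<Rightarrow> bool" where
  "compatible_on le tr A \<longleftrightarrow>
     (\<forall>s\<in>A. \<forall>s' t. t \<in> A \<longrightarrow> tr s s' \<longrightarrow> le s t \<longrightarrow>
        (\<exists>t'. tr t t' \<and> le s' t'))"

end

theory Submission
  imports Defs "HOL-Library.Ramsey" "HOL-Library.Sublist"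
begin

(* A configuration is a strictly colour-increasing list of blocks, each block being the word of
   states of the agents of one colour.  Since Q is finite, Higman's lemma (proved by Nash-Williams'
   minimal bad sequence argument), applied once to the words of a block and once to the lists of
   blocks, gives for every infinite sequence of configurations indices i < j such that the blocks
   of the i-th configuration embed, in order and each as a subword, into the blocks of the j-th.
   The induced map on colours is strictly increasing, so the i-th configuration is a
   subconfiguration of the j-th.
   Compatibility: the embedding f of s into t preserves states and colour comparisons, so the
   interaction of agents i and j in s is simulated by that of f i and f j in t. *)

section \<open>Almost-full relations and Higman's lemma\<close>

definition good :: "('a \<Rightarrow> 'a \<Rightarrow> bool) \<Rightarrow> (nat \<Rightarrow> 'a) \<Rightarrow> bool" where
  "good P X \<longleftrightarrow> (\<exists>i j. i < j \<and> P (X i) (X j))"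

definition almost_full :: "('a \<Rightarrow> 'a \<Rightarrow> bool) \<Rightarrow> bool" where
  "almost_full P \<longleftrightarrow> (\<forall>X. good P X)"

lemma almost_full_eq_finite: "almost_full ((=) :: 'a::finite \<Rightarrow> 'a \<Rightarrow> bool)"
  unfolding almost_full_def good_def
proof
  fix X :: "nat \<Rightarrow> 'a"
  have "\<not> inj X"
    using finite_imageD[of X UNIV] infinite_UNIV_nat by auto
  then obtain i j where "i \<noteq> j" "X i = X j"
    by (auto simp: inj_def)
  then show "\<exists>i j. i < j \<and> X i = X j"
    by (metis linorder_neq_iff)
qed

lemma almost_full_comp: "almost_full P \<Longrightarrow> almost_full (\<lambda>x y. P (f x) (f y))"
  unfolding almost_full_def good_def by (metis comp_apply)

lemma almost_full_homogeneous_subseq: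
  assumes "almost_full P"
  obtains \<phi> :: "nat \<Rightarrow> nat" where "strict_mono \<phi>" "\<And>i j. i < j \<Longrightarrow> P (X (\<phi> i)) (X (\<phi> j))"
proof -
  define colour where "colour S = (if P (X (Min S)) (X (Max S)) then 0 else 1::nat)" for S
  have "\<forall>x\<in>UNIV. \<forall>y\<in>UNIV. x \<noteq> y \<longrightarrow> colour {x, y} < 2"
    by (simp add: colour_def)
  from Ramsey2[OF infinite_UNIV_nat this] obtain Y t
    where Y: "infinite Y" and t: "\<forall>x\<in>Y. \<forall>y\<in>Y. x \<noteq> y \<longrightarrow> colour {x, y} = t"
    by blast
  define \<phi> where "\<phi> = enumerate Y"
  have mono: "strict_mono \<phi>"
    using Y by (simp add: \<phi>_def strict_mono_def enumerate_mono)
  have colour_\<phi>: "(if P (X (\<phi> i)) (X (\<phi> j)) then 0 else 1) = t" if "i < j" for i j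
  proof -
    have "\<phi> i < \<phi> j" "\<phi> i \<in> Y" "\<phi> j \<in> Y"
      using strict_monoD[OF mono that] enumerate_in_set[OF Y] by (auto simp: \<phi>_def)
    then show ?thesis
      using t by (force simp: colour_def)
  qed
  have "t = 0"
  proof (rule ccontr)
    assume "t \<noteq> 0"
    then have "\<not> good P (X \<circ> \<phi>)"
      using colour_\<phi> by (fastforce simp: good_def split: if_splits)
    with assms show False
      by (simp add: almost_full_def)
  qed
  with colour_\<phi> mono that show ?thesis
    by (metis one_neq_zero)
qed

lemma bad_seq_minimal_extension:
  fixes weight :: "'a \<Rightarrow> nat"
  assumes "\<not> good P Z"
  obtains Y where "\<not> good P Y" "\<forall>i<n. Y i = Z i"
    "\<And>W. \<not> good P W \<Longrightarrow> \<forall>i<n. W i = Z i \<Longrightarrow> weight (Y n) \<le> weight (W n)"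
proof -
  obtain Y where "\<not> good P Y \<and> (\<forall>i<n. Y i = Z i)"
    and "\<forall>W. \<not> good P W \<and> (\<forall>i<n. W i = Z i) \<longrightarrow> weight (Y n) \<le> weight (W n)"
    using ex_has_least_nat[of "\<lambda>Y. \<not> good P Y \<and> (\<forall>i<n. Y i = Z i)" Z "\<lambda>Y. weight (Y n)"] assms
    by blast
  with that show ?thesis
    by blast
qed

lemma minimal_bad_seq:
  fixes weight :: "'a \<Rightarrow> nat"
  assumes "\<not> good P X"
  obtains M where "\<not> good P M"
    "\<And>n W. \<not> good P W \<Longrightarrow> \<forall>i<n. W i = M i \<Longrightarrow> weight (M n) \<le> weight (W n)"
proof -
  define minimal_ext where "minimal_ext n Z Y \<longleftrightarrow> \<not> good P Y \<and> (\<forall>i<n. Y i = Z i) \<and>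
    (\<forall>W. \<not> good P W \<and> (\<forall>i<n. W i = Z i) \<longrightarrow> weight (Y n) \<le> weight (W n))" for n Z Y
  define ext where "ext n Z = (SOME Y. minimal_ext n Z Y)" for n Z
  have ext: "minimal_ext n Z (ext n Z)" if bad: "\<not> good P Z" for n Z
  proof -
    obtain Y where "\<not> good P Y" "\<forall>i<n. Y i = Z i"
      "\<And>W. \<not> good P W \<Longrightarrow> \<forall>i<n. W i = Z i \<Longrightarrow> weight (Y n) \<le> weight (W n)"
      using bad_seq_minimal_extension[OF bad, of n weight] by blast
    then have "minimal_ext n Z Y"
      by (simp add: minimal_ext_def)
    then show ?thesis
      unfolding ext_def by (rule someI[where P = "minimal_ext n Z"])
  qed
  define seq where "seq = rec_nat (ext 0 X) (\<lambda>n Z. ext (Suc n) Z)"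
  have seq_0: "seq 0 = ext 0 X" and seq_Suc: "seq (Suc n) = ext (Suc n) (seq n)" for n
    by (simp_all add: seq_def)
  have seq_bad: "\<not> good P (seq n)" for n
    by (induction n) (use ext assms in \<open>auto simp: seq_0 seq_Suc minimal_ext_def\<close>)
  have seq_stable: "seq (n + k) i = seq n i" if "i \<le> n" for n k i
    using that by (induction k) (use ext seq_bad in \<open>auto simp: seq_Suc minimal_ext_def\<close>)
  define M where "M i = seq i i" for i
  have M_seq: "M i = seq n i" if "i \<le> n" for i n
    using seq_stable[of i i "n - i"] that by (simp add: M_def)
  show ?thesis
  proof
    show "\<not> good P M"
    proof
      assume "good P M"
      then obtain i j where "i < j" "P (M i) (M j)"
        by (auto simp: good_def)
      then have "good P (seq j)"
        using M_seq[of i j] M_seq[of j j] by (auto simp: good_def)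
      with seq_bad show False
        by blast
    qed
  next
    fix n W assume W: "\<not> good P W" "\<forall>i<n. W i = M i"
    show "weight (M n) \<le> weight (W n)"
    proof (cases n)
      case 0
      then show ?thesis
        using ext[OF assms, of 0] W by (simp add: M_def seq_0 minimal_ext_def)
    next
      case (Suc m)
      then have "\<forall>i<n. W i = seq m i"
        using W(2) M_seq by simp
      then show ?thesis
        using ext[OF seq_bad[of m], of n] W(1) Suc by (simp add: M_def seq_Suc minimal_ext_def)
    qed
  qed
qed

lemma good_list_emb_if_good_tails:
  assumes "strict_mono \<phi>" and heads: "\<And>i j. i < j \<Longrightarrow> P (hd (M (\<phi> i))) (hd (M (\<phi> j)))"
    and M_ne: "\<And>i. M i \<noteq> []"
    and "good (list_emb P) (\<lambda>k. if k < \<phi> 0 then M k else tl (M (\<phi> (k - \<phi> 0))))"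
  shows "good (list_emb P) M"
proof -
  define n where "n = \<phi> 0"
  have \<phi>_ge: "n \<le> \<phi> k" for k
    using assms(1) by (simp add: n_def strict_mono_less_eq)
  obtain i j where "i < j"
    and ij: "list_emb P (if i < n then M i else tl (M (\<phi> (i - n))))
      (if j < n then M j else tl (M (\<phi> (j - n))))"
    using assms(4) unfolding good_def n_def[symmetric] by blast
  consider "j < n" | "i < n" "n \<le> j" | "n \<le> i"
    using \<open>i < j\<close> by linarith
  then show ?thesis
  proof cases
    case 1
    then show ?thesis
      using \<open>i < j\<close> ij by (auto simp: good_def)
  next
    case 2
    then have "list_emb P (M i) (tl (M (\<phi> (j - n))))"
      using ij by simp
    from list_emb_Cons[OF this, of "hd (M (\<phi> (j - n)))"] have "list_emb P (M i) (M (\<phi> (j - n)))"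
      by (simp add: M_ne)
    moreover have "i < \<phi> (j - n)"
      using 2 \<phi>_ge[of "j - n"] by linarith
    ultimately show ?thesis
      unfolding good_def by blast
  next
    case 3
    then have i_j: "i - n < j - n"
      using \<open>i < j\<close> by simp
    have "list_emb P (tl (M (\<phi> (i - n)))) (tl (M (\<phi> (j - n))))"
      using ij 3 \<open>i < j\<close> by simp
    from list_emb_Cons2[OF heads[OF i_j] this] have "list_emb P (M (\<phi> (i - n))) (M (\<phi> (j - n)))"
      by (simp add: M_ne)
    then show ?thesis
      using strict_monoD[OF assms(1) i_j] by (auto simp: good_def)
  qed
qed

theorem almost_full_list_emb:
  assumes "almost_full P"
  shows "almost_full (list_emb P)"
  unfolding almost_full_def
proof (rule allI, rule ccontr)
  fix X assume "\<not> good (list_emb P) X"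
  then obtain M where bad: "\<not> good (list_emb P) M"
    and minimal: "\<And>n W. \<not> good (list_emb P) W \<Longrightarrow> \<forall>i<n. W i = M i \<Longrightarrow> length (M n) \<le> length (W n)"
    using minimal_bad_seq[of "list_emb P" X length] by blast
  have M_ne: "M i \<noteq> []" for i
    using bad by (metis good_def lessI list_emb_Nil)
  obtain \<phi> :: "nat \<Rightarrow> nat" where \<phi>: "strict_mono \<phi>"
    and heads: "\<And>i j. i < j \<Longrightarrow> P (hd (M (\<phi> i))) (hd (M (\<phi> j)))"
    using almost_full_homogeneous_subseq[OF assms, of "\<lambda>i. hd (M i)"] by blast
  \<comment> \<open>Dropping the heads of the homogeneous subsequence gives a sequence below the minimal bad \<open>M\<close>.\<close>
  define W where "W k = (if k < \<phi> 0 then M k else tl (M (\<phi> (k - \<phi> 0))))" for k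
  have "\<forall>i<\<phi> 0. W i = M i" "length (W (\<phi> 0)) < length (M (\<phi> 0))"
    using M_ne by (simp_all add: W_def)
  then have "good (list_emb P) W"
    using minimal[of W "\<phi> 0"] by fastforce
  with bad show False
    using good_list_emb_if_good_tails[of \<phi> P M, OF \<phi> heads M_ne] by (simp add: W_def[abs_def])
qed

section \<open>Subconfigurations\<close>

definition subconf_via :: "(nat \<Rightarrow> nat) \<Rightarrow> ('q \<times> 'd::linorder) list \<Rightarrow> ('q \<times> 'd) list \<Rightarrow> bool" where
  "subconf_via f s t \<longleftrightarrow>
     strict_mono_on {..<length s} f \<and>
     (\<forall>i<length s. f i < length t) \<and>
     (\<forall>i<length s. fst (s ! i) = fst (t ! f i)) \<and>
     (\<forall>i<length s. \<forall>j<length s. (snd (s ! i) \<le> snd (s ! j)) \<longleftrightarrow> (snd (t ! f i) \<le> snd (t ! f j)))"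

lemma subconf_iff_subconf_via: "subconf s t \<longleftrightarrow> (\<exists>f. subconf_via f s t)"
  by (simp add: subconf_def subconf_via_def)

lemma subconf_via_inj:
  "subconf_via f s t \<Longrightarrow> i < length s \<Longrightarrow> j < length s \<Longrightarrow> f i = f j \<longleftrightarrow> i = j"
  unfolding subconf_via_def by (metis lessThan_iff strict_mono_on_eqD)

lemma subconf_refl: "subconf s s"
  unfolding subconf_iff_subconf_via subconf_via_def by (auto intro!: exI[of _ id] simp: strict_mono_on_def)

lemma subconf_trans:
  assumes "subconf s t" and "subconf t u"
  shows "subconf s u"
proof -
  obtain f h where "subconf_via f s t" "subconf_via h t u"
    using assms by (auto simp: subconf_iff_subconf_via)
  then have "subconf_via (h \<circ> f) s u"
    unfolding subconf_via_def strict_mono_on_def by auto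
  then show ?thesis
    by (auto simp: subconf_iff_subconf_via)
qed

section \<open>Configurations as lists of colour blocks\<close>

definition config_of_blocks :: "('d \<times> 'q list) list \<Rightarrow> ('q \<times> 'd) list" where
  "config_of_blocks G = concat (map (\<lambda>(d, w). map (\<lambda>q. (q, d)) w) G)"

lemma config_of_blocks_Nil [simp]: "config_of_blocks [] = []"
  by (simp add: config_of_blocks_def)

lemma config_of_blocks_Cons [simp]:
  "config_of_blocks ((d, w) # G) = map (\<lambda>q. (q, d)) w @ config_of_blocks G"
  by (simp add: config_of_blocks_def)

lemma colours_config_of_blocks: "snd ` set (config_of_blocks G) \<subseteq> fst ` set G"
proof (induction G)
  case (Cons x G)
  then show ?case
    by (cases x) auto
qed simp

lemma sorted_config_as_blocks:
  fixes c :: "('q \<times> 'd::linorder) list"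
  assumes "sorted (map snd c)"
  obtains G where "sorted_wrt (<) (map fst G)" "config_of_blocks G = c"
proof -
  have "\<exists>G. sorted_wrt (<) (map fst G) \<and> config_of_blocks G = c \<and>
      (c \<noteq> [] \<longrightarrow> G \<noteq> [] \<and> fst (hd G) = snd (hd c))"
    using assms
  proof (induction c)
    case Nil
    show ?case
      by (intro exI[of _ "[]"]) simp
  next
    case (Cons x c)
    obtain q d where x: "x = (q, d)"
      by force
    from Cons obtain G where G: "sorted_wrt (<) (map fst G)" "config_of_blocks G = c"
      "c \<noteq> [] \<longrightarrow> G \<noteq> [] \<and> fst (hd G) = snd (hd c)"
      by auto
    show ?case
    proof (cases c)
      case Nil
      then show ?thesis
        using x G by (intro exI[of _ "[(d, [q])]"]) auto
    next
      case (Cons y c')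
      then obtain w G' where G_Cons: "G = (snd y, w) # G'"
        using G(3) by (cases G) auto
      have "d \<le> snd y"
        using Cons.prems x Cons by simp
      then consider "d = snd y" | "d < snd y"
        by fastforce
      then show ?thesis
      proof cases
        case 1
        then show ?thesis
          using x G G_Cons by (intro exI[of _ "(d, q # w) # G'"]) auto
      next
        case 2
        then show ?thesis
          using x G G_Cons by (intro exI[of _ "(d, [q]) # G"]) auto
      qed
    qed
  qed
  with that show ?thesis
    by blast
qed

lemma strict_mono_on_insert_below:
  fixes g :: "'a::order \<Rightarrow> 'b::order"
  assumes "strict_mono_on A g" "\<forall>a\<in>A. d < a" "\<forall>a\<in>A. e < g a"
  shows "strict_mono_on (insert d A) (g(d := e))"
  using assms unfolding strict_mono_on_def by (metis fun_upd_apply insert_iff order.asym)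

definition config_emb :: "(nat \<Rightarrow> nat) \<Rightarrow> ('d \<Rightarrow> 'd) \<Rightarrow> ('q \<times> 'd) list \<Rightarrow> ('q \<times> 'd) list \<Rightarrow> bool" where
  "config_emb f g s t \<longleftrightarrow> strict_mono_on {..<length s} f \<and>
     (\<forall>i<length s. f i < length t \<and> fst (t ! f i) = fst (s ! i) \<and> snd (t ! f i) = g (snd (s ! i)))"

lemma config_emb_append_left:
  "config_emb f g s t \<Longrightarrow> config_emb (\<lambda>i. length u + f i) g s (u @ t)"
  unfolding config_emb_def strict_mono_on_def by (auto simp: nth_append_length_plus)

lemma config_emb_Cons:
  assumes "config_emb f g s t" "fst b = fst a" "snd b = g (snd a)"
  shows "config_emb (case_nat 0 (\<lambda>k. Suc (f k))) g (a # s) (b # t)"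
  using assms unfolding config_emb_def strict_mono_on_def by (auto split: nat.splits)

lemma config_emb_fun_upd:
  "config_emb f g s t \<Longrightarrow> d \<notin> snd ` set s \<Longrightarrow> config_emb f (g(d := e)) s t"
  unfolding config_emb_def by (metis fun_upd_other image_eqI nth_mem)

lemma config_emb_imp_subconf:
  assumes "config_emb f g s t" and "strict_mono_on (snd ` set s) g"
  shows "subconf s t"
  unfolding subconf_def
proof (intro exI[of _ f] conjI allI impI)
  show "strict_mono_on {..<length s} f"
    using assms(1) by (simp add: config_emb_def)
  fix i assume i: "i < length s"
  then show "f i < length t" "fst (s ! i) = fst (t ! f i)"
    using assms(1) by (auto simp: config_emb_def)
  fix j assume j: "j < length s"
  have "snd (t ! f i) = g (snd (s ! i))" "snd (t ! f j) = g (snd (s ! j))"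
    using assms(1) i j by (auto simp: config_emb_def)
  moreover have "snd (s ! i) \<in> snd ` set s" "snd (s ! j) \<in> snd ` set s"
    using i j by auto
  ultimately show "snd (s ! i) \<le> snd (s ! j) \<longleftrightarrow> snd (t ! f i) \<le> snd (t ! f j)"
    using assms(2) by (metis linorder_not_le strict_mono_on_leD strict_mono_onD order.strict_implies_order)
qed

lemma list_emb_config_emb_block:
  assumes "list_emb (=) w v" "config_emb f g s t" "g d = e"
  shows "\<exists>f'. config_emb f' g (map (\<lambda>q. (q, d)) w @ s) (map (\<lambda>q. (q, e)) v @ t)"
  using assms(1)
proof (induction rule: list_emb.induct)
  case (list_emb_Nil ys)
  show ?case
    using config_emb_append_left[OF assms(2)] by auto
next
  case (list_emb_Cons xs ys y)
  then obtain f' where "config_emb f' g (map (\<lambda>q. (q, d)) xs @ s) (map (\<lambda>q. (q, e)) ys @ t)"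
    by blast
  from config_emb_append_left[OF this, of "[(y, e)]"] show ?case
    by auto
next
  case (list_emb_Cons2 x y xs ys)
  then obtain f' where "config_emb f' g (map (\<lambda>q. (q, d)) xs @ s) (map (\<lambda>q. (q, e)) ys @ t)"
    by blast
  from config_emb_Cons[OF this, of "(y, e)" "(x, d)"] list_emb_Cons2.hyps(1) assms(3) show ?case
    by auto
qed

lemma list_emb_blocks_imp_config_emb:
  fixes G H :: "('d::linorder \<times> 'q list) list"
  assumes "list_emb (\<lambda>x y. list_emb (=) (snd x) (snd y)) G H"
    and "sorted_wrt (<) (map fst G)" "sorted_wrt (<) (map fst H)"
  shows "\<exists>f g. config_emb f g (config_of_blocks G) (config_of_blocks H) \<and>
    strict_mono_on (fst ` set G) g \<and> g ` fst ` set G \<subseteq> fst ` set H"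
  using assms
proof (induction rule: list_emb.induct)
  case (list_emb_Nil ys)
  show ?case
    by (auto simp: config_emb_def)
next
  case (list_emb_Cons xs ys y)
  then obtain f g where fg: "config_emb f g (config_of_blocks xs) (config_of_blocks ys)"
    "strict_mono_on (fst ` set xs) g" "g ` fst ` set xs \<subseteq> fst ` set ys"
    by auto
  obtain e v where "y = (e, v)"
    by force
  then show ?case
    using config_emb_append_left[OF fg(1), of "map (\<lambda>q. (q, e)) v"] fg(2,3)
    by (intro exI[of _ "\<lambda>i. length v + f i"] exI[of _ g] conjI) auto
next
  case (list_emb_Cons2 x y xs ys)
  obtain d w where x: "x = (d, w)"
    by force
  obtain e v where y: "y = (e, v)"
    by force
  from list_emb_Cons2 obtain f g where fg: "config_emb f g (config_of_blocks xs) (config_of_blocks ys)"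
    "strict_mono_on (fst ` set xs) g" "g ` fst ` set xs \<subseteq> fst ` set ys"
    by auto
  have d_below: "\<forall>a\<in>fst ` set xs. d < a" and e_below: "\<forall>b\<in>fst ` set ys. e < b"
    using list_emb_Cons2.prems x y by auto
  have g_above: "\<forall>a\<in>fst ` set xs. e < g a"
    using fg(3) e_below by blast
  have "d \<notin> snd ` set (config_of_blocks xs)"
    using d_below colours_config_of_blocks[of xs] by fastforce
  from config_emb_fun_upd[OF fg(1) this]
  have "config_emb f (g(d := e)) (config_of_blocks xs) (config_of_blocks ys)" .
  moreover have "list_emb (=) w v"
    using list_emb_Cons2.hyps(1) x y by simp
  ultimately obtain f' where "config_emb f' (g(d := e))
      (map (\<lambda>q. (q, d)) w @ config_of_blocks xs) (map (\<lambda>q. (q, e)) v @ config_of_blocks ys)"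
    using list_emb_config_emb_block[of w v f "g(d := e)" _ _ d e] by auto
  then have "config_emb f' (g(d := e)) (config_of_blocks (x # xs)) (config_of_blocks (y # ys))"
    using x y by simp
  moreover have "strict_mono_on (fst ` set (x # xs)) (g(d := e))"
    using strict_mono_on_insert_below[OF fg(2) d_below g_above] x by simp
  moreover have "(g(d := e)) ` fst ` set (x # xs) \<subseteq> fst ` set (y # ys)"
    using fg(3) d_below x y by auto
  ultimately show ?case
    by blast
qed

lemma list_emb_blocks_imp_subconf:
  fixes G H :: "('d::linorder \<times> 'q list) list"
  assumes "list_emb (\<lambda>x y. list_emb (=) (snd x) (snd y)) G H"
    and "sorted_wrt (<) (map fst G)" "sorted_wrt (<) (map fst H)"
  shows "subconf (config_of_blocks G) (config_of_blocks H)"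
proof -
  obtain f g where emb: "config_emb f g (config_of_blocks G) (config_of_blocks H)"
    and mono: "strict_mono_on (fst ` set G) g"
    using list_emb_blocks_imp_config_emb[OF assms] by blast
  show ?thesis
    using config_emb_imp_subconf[OF emb monotone_on_subset[OF mono colours_config_of_blocks]] .
qed

lemma good_subconf_configs:
  fixes X :: "nat \<Rightarrow> ('q::finite \<times> 'd::linorder) list"
  assumes "\<And>k. is_config (X k)"
  shows "good subconf X"
proof -
  define G where "G k = (SOME G. sorted_wrt (<) (map fst G) \<and> config_of_blocks G = X k)" for k
  have G: "sorted_wrt (<) (map fst (G k)) \<and> config_of_blocks (G k) = X k" for k
    unfolding G_def
    by (rule someI_ex, rule sorted_config_as_blocks[of "X k"]) (use assms in \<open>auto simp: is_config_def\<close>)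
  have "almost_full (list_emb (\<lambda>x y :: 'd \<times> 'q list. list_emb (=) (snd x) (snd y)))"
    using almost_full_eq_finite almost_full_list_emb almost_full_comp[of "list_emb (=)" snd]
    by metis
  then have "good (list_emb (\<lambda>x y. list_emb (=) (snd x) (snd y))) G"
    by (simp add: almost_full_def)
  then show ?thesis
    using list_emb_blocks_imp_subconf G unfolding good_def by metis
qed

section \<open>Compatibility with transitions\<close>

lemma compare_eq_if_le_iff:
  fixes x y x' y' :: "'a::linorder"
  assumes "x \<le> y \<longleftrightarrow> x' \<le> y'" and "y \<le> x \<longleftrightarrow> y' \<le> x'"
  shows "compare x y = compare x' y'"
proof -
  have "x < y \<longleftrightarrow> x' < y'"
    using assms by (simp add: less_le_not_le)
  moreover have "x = y \<longleftrightarrow> x' = y'"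
    using assms by (metis order.eq_iff)
  ultimately show ?thesis
    by (simp add: compare_def)
qed

definition interact ::
  "('q \<Rightarrow> 'q \<Rightarrow> cmp \<Rightarrow> 'q \<times> 'q) \<Rightarrow> ('q \<times> 'd::linorder) list \<Rightarrow> nat \<Rightarrow> nat \<Rightarrow> ('q \<times> 'd) list" where
  "interact delta c i j =
     (let (qi, qj) = delta (fst (c ! i)) (fst (c ! j)) (compare (snd (c ! i)) (snd (c ! j)))
      in c[i := (qi, snd (c ! i)), j := (qj, snd (c ! j))])"

lemma step_iff_interact:
  "step delta c c' \<longleftrightarrow>
     (\<exists>i j. i < length c \<and> j < length c \<and> i \<noteq> j \<and> c' = interact delta c i j)"
  unfolding step_def interact_def Let_def by (simp only: case_prod_beta)

lemma subconf_via_update: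
  assumes "subconf_via f s t" "i < length s"
  shows "subconf_via f (s[i := (q, snd (s ! i))]) (t[f i := (q, snd (t ! f i))])"
proof -
  have f: "strict_mono_on {..<length s} f" "\<forall>k<length s. f k < length t"
    "\<forall>k<length s. fst (s ! k) = fst (t ! f k)"
    "\<forall>k<length s. \<forall>l<length s. (snd (s ! k) \<le> snd (s ! l)) \<longleftrightarrow> (snd (t ! f k) \<le> snd (t ! f l))"
    using assms(1) unfolding subconf_via_def by blast+
  have f_ne: "f k \<noteq> f i" if "k < length s" "k \<noteq> i" for k
    using subconf_via_inj[OF assms(1) that(1) assms(2)] that(2) by simp
  have snd_s: "snd (s[i := (q, snd (s ! i))] ! k) = snd (s ! k)" for k
    using assms(2) by (cases "k = i") simp_all
  have snd_t: "snd (t[f i := (q, snd (t ! f i))] ! f k) = snd (t ! f k)" for k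
    using assms(2) f(2) by (cases "f k = f i") simp_all
  have fst_eq: "fst (s[i := (q, snd (s ! i))] ! k) = fst (t[f i := (q, snd (t ! f i))] ! f k)"
    if "k < length s" for k
  proof (cases "k = i")
    case True
    then show ?thesis
      using assms(2) f(2) by simp
  next
    case False
    then show ?thesis
      using f(3) f_ne[OF that False] that by simp
  qed
  show ?thesis
    unfolding subconf_via_def using f fst_eq by (simp add: snd_s snd_t)
qed

lemma subconf_via_interact:
  assumes "subconf_via f s t" "i < length s" "j < length s" "i \<noteq> j"
  shows "subconf_via f (interact delta s i j) (interact delta t (f i) (f j))"
proof -
  have "f i \<noteq> f j"
    using subconf_via_inj[OF assms(1-3)] assms(4) by simp
  moreover have "compare (snd (t ! f i)) (snd (t ! f j)) = compare (snd (s ! i)) (snd (s ! j))"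
    using assms by (intro compare_eq_if_le_iff) (auto simp: subconf_via_def)
  moreover have "fst (t ! f i) = fst (s ! i)" "fst (t ! f j) = fst (s ! j)"
    using assms by (auto simp: subconf_via_def)
  moreover note subconf_via_update[OF subconf_via_update[OF assms(1,2)], of j]
  ultimately show ?thesis
    using assms by (simp add: interact_def case_prod_beta)
qed

lemma step_compatible_subconf:
  assumes "step delta s s'" "subconf s t"
  shows "\<exists>t'. step delta t t' \<and> subconf s' t'"
proof -
  obtain i j where ij: "i < length s" "j < length s" "i \<noteq> j" and s': "s' = interact delta s i j"
    using assms(1) by (auto simp: step_iff_interact)
  obtain f where f: "subconf_via f s t"
    using assms(2) by (auto simp: subconf_iff_subconf_via)
  have "f i < length t" "f j < length t" "f i \<noteq> f j"
    using f ij subconf_via_inj[OF f ij(1,2)] by (auto simp: subconf_via_def)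
  then have "step delta t (interact delta t (f i) (f j))"
    by (auto simp: step_iff_interact)
  moreover have "subconf s' (interact delta t (f i) (f j))"
    using subconf_via_interact[OF f ij] s' by (auto simp: subconf_iff_subconf_via)
  ultimately show ?thesis
    by blast
qed

theorem lemma8:
  fixes delta :: "'q::finite \<Rightarrow> 'q \<Rightarrow> cmp \<Rightarrow> 'q \<times> 'q"
  shows "wqo_on (subconf :: ('q \<times> 'd::linorder) list \<Rightarrow> _ \<Rightarrow> bool) {c. is_config c}
         \<and> compatible_on subconf (step delta) {c :: ('q \<times> 'd) list. is_config c}"
proof
  show "wqo_on (subconf :: ('q \<times> 'd::linorder) list \<Rightarrow> _ \<Rightarrow> bool) {c. is_config c}"
    unfolding wqo_on_def
  proof (intro conjI ballI allI impI)
    fix X :: "nat \<Rightarrow> ('q \<times> 'd) list"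
    assume "\<forall>k. X k \<in> {c. is_config c}"
    then show "\<exists>i j. i < j \<and> subconf (X i) (X j)"
      using good_subconf_configs[of X] by (simp add: good_def)
  qed (auto intro: subconf_refl subconf_trans)
next
  show "compatible_on subconf (step delta) {c :: ('q \<times> 'd) list. is_config c}"
    using step_compatible_subconf unfolding compatible_on_def by blast
qed

end
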